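(* Let $X,Y$ be sets and let $G\subseteq X\times Y$ be a connected bipartite graph. Let $\mathcal F(G)$ be the set of finite, connected, twin-free induced subgraphs of $G$. If $\mathcal F(G)$ contains only finitely many pairwise non-isomorphic bipartite graphs, then $\operatorname{tf}(G)$ is finite.
   Context: A subset $G\subseteq X\times Y$ is viewed as a bipartite graph with vertex set the disjoint union of $X$ and $Y$ and edge set $G$. For $X_0\subseteq X$, $Y_0\subseteq Y$, the induced subgraph is $G[X_0,Y_0]=G\cap(X_0\times Y_0)$ (with vertex set $X_0\sqcup Y_0$). Two vertices are twins if they have the same set of neighbours; a graph is twin-free if no two distinct vertices are twins. $\operatorname{tf}(G)$ denotes a maximal twin-free induced subgraph of $G$, obtained by choosing one vertex from each twin-equivalence class; it is unique up to isomorphism. Isomorphisms of bipartite graphs are bijections of vertex sets preserving edges and mapping the two sides onto the two sides (possibly swapping them). *)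

theory Defs
  imports Main
begin

text \<open>A bipartite graph is given by two sides X, Y and an edge set E (only the
part of E inside X \<times> Y counts). Its vertex set is the disjoint union X <+> Y.\<close>

definition nbr :: "'a set \<Rightarrow> 'b set \<Rightarrow> ('a \<times> 'b) set \<Rightarrow> 'a + 'b \<Rightarrow> ('a + 'b) set" where
  "nbr X Y E v = (case v of
      Inl x \<Rightarrow> Inr ` {y \<in> Y. x \<in> X \<and> (x, y) \<in> E}
    | Inr y \<Rightarrow> Inl ` {x \<in> X. y \<in> Y \<and> (x, y) \<in> E})"

definition twin_free :: "'a set \<Rightarrow> 'b set \<Rightarrow> ('a \<times> 'b) set \<Rightarrow> bool" where
  "twin_free X Y E \<longleftrightarrow> inj_on (nbr X Y E) (X <+> Y)"

definition adj :: "'a set \<Rightarrow> 'b set \<Rightarrow> ('a \<times> 'b) set \<Rightarrow> ('a + 'b) rel" where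
  "adj X Y E = {(Inl x, Inr y) | x y. x \<in> X \<and> y \<in> Y \<and> (x, y) \<in> E}"

definition bip_connected :: "'a set \<Rightarrow> 'b set \<Rightarrow> ('a \<times> 'b) set \<Rightarrow> bool" where
  "bip_connected X Y E \<longleftrightarrow>
     (\<forall>u \<in> X <+> Y. \<forall>v \<in> X <+> Y. (u, v) \<in> (adj X Y E \<union> (adj X Y E)\<inverse>)\<^sup>*)"

definition bip_iso :: "'a set \<Rightarrow> 'b set \<Rightarrow> ('a \<times> 'b) set \<Rightarrow>
                       'c set \<Rightarrow> 'd set \<Rightarrow> ('c \<times> 'd) set \<Rightarrow> bool" where
  "bip_iso X1 Y1 E1 X2 Y2 E2 \<longleftrightarrow>
     (\<exists>f g. bij_betw f X1 X2 \<and> bij_betw g Y1 Y2 \<and>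
        (\<forall>x \<in> X1. \<forall>y \<in> Y1. (x, y) \<in> E1 \<longleftrightarrow> (f x, g y) \<in> E2))
   \<or> (\<exists>f g. bij_betw f X1 Y2 \<and> bij_betw g Y1 X2 \<and>
        (\<forall>x \<in> X1. \<forall>y \<in> Y1. (x, y) \<in> E1 \<longleftrightarrow> (g y, f x) \<in> E2))"

definition induced :: "('a \<times> 'b) set \<Rightarrow> 'a set \<Rightarrow> 'b set \<Rightarrow> ('a \<times> 'b) set" where
  "induced G X0 Y0 = G \<inter> (X0 \<times> Y0)"

definition FG :: "'a set \<Rightarrow> 'b set \<Rightarrow> ('a \<times> 'b) set \<Rightarrow> ('a set \<times> 'b set) set" where
  "FG X Y G = {(X0, Y0). X0 \<subseteq> X \<and> Y0 \<subseteq> Y \<and> finite X0 \<and> finite Y0 \<and>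
       bip_connected X0 Y0 (induced G X0 Y0) \<and> twin_free X0 Y0 (induced G X0 Y0)}"

text \<open>A family of induced subgraphs contains only finitely many pairwise
non-isomorphic graphs: finitely many of its members represent all isomorphism types.\<close>
definition finitely_many_iso_types :: "('a \<times> 'b) set \<Rightarrow> ('a set \<times> 'b set) set \<Rightarrow> bool" where
  "finitely_many_iso_types G F \<longleftrightarrow>
     (\<exists>S. finite S \<and> S \<subseteq> F \<and>
        (\<forall>(X1, Y1) \<in> F. \<exists>(X2, Y2) \<in> S.
            bip_iso X1 Y1 (induced G X1 Y1) X2 Y2 (induced G X2 Y2)))"

text \<open>(X0,Y0) are the sides of a tf(G): one vertex chosen from each twin class of G.\<close>
definition is_tf :: "'a set \<Rightarrow> 'b set \<Rightarrow> ('a \<times> 'b) set \<Rightarrow> 'a set \<Rightarrow> 'b set \<Rightarrow> bool" where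
  "is_tf X Y G X0 Y0 \<longleftrightarrow> X0 \<subseteq> X \<and> Y0 \<subseteq> Y \<and>
     (\<forall>v \<in> X <+> Y. \<exists>!w. w \<in> X0 <+> Y0 \<and> nbr X Y G w = nbr X Y G v)"

end

theory Submission
  imports Defs
begin

text \<open>Since F(G) has only finitely many isomorphism types, its members have at most M vertices
for some M. If tf(G) were infinite, pick M + 1 of its vertices; they are pairwise non-twins, and
finitely many further vertices separate their neighbourhoods. As G is connected, all these
vertices lie in a finite connected induced subgraph H. Keeping one representative of each twin
class of H gives a finite, connected, twin-free induced subgraph, because twins of H are
interchangeable as endpoints of edges of H. It has at least M + 1 vertices, a contradiction.\<close>

definition edges_on :: "('v \<Rightarrow> 'v set) \<Rightarrow> 'v set \<Rightarrow> 'v rel" where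
  "edges_on N W = {(u, v). u \<in> W \<and> v \<in> W \<and> v \<in> N u}"

definition connected_on :: "('v \<Rightarrow> 'v set) \<Rightarrow> 'v set \<Rightarrow> bool" where
  "connected_on N W \<longleftrightarrow> (\<forall>u \<in> W. \<forall>v \<in> W. (u, v) \<in> (edges_on N W)\<^sup>*)"

definition symmetric_on :: "('v \<Rightarrow> 'v set) \<Rightarrow> 'v set \<Rightarrow> bool" where
  "symmetric_on N W \<longleftrightarrow> (\<forall>u \<in> W. \<forall>v \<in> W. v \<in> N u \<longleftrightarrow> u \<in> N v)"

lemma symmetric_on_subset: "symmetric_on N V \<Longrightarrow> W \<subseteq> V \<Longrightarrow> symmetric_on N W"
  unfolding symmetric_on_def by blast

lemma converse_edges_on: "symmetric_on N W \<Longrightarrow> (edges_on N W)\<inverse> = edges_on N W"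
  unfolding symmetric_on_def edges_on_def by blast

lemma edges_on_Int: "edges_on N V \<inter> P \<times> P = edges_on N (V \<inter> P)"
  unfolding edges_on_def by blast

lemma rtrancl_map:
  assumes "(a, b) \<in> r\<^sup>*" and "\<And>x y. (x, y) \<in> r \<Longrightarrow> (h x, h y) \<in> s"
  shows "(h a, h b) \<in> s\<^sup>*"
  using assms(1) by induction (auto intro: rtrancl_into_rtrancl assms(2))

lemma rtrancl_finite_support:
  assumes "(u, v) \<in> r\<^sup>*"
  obtains P where "finite P" "u \<in> P" "v \<in> P" "\<forall>w \<in> P. (u, w) \<in> (r \<inter> P \<times> P)\<^sup>*"
  using assms
proof (induction arbitrary: thesis rule: rtrancl_induct)
  case base
  show ?case by (rule base[of "{u}"]) auto
next
  case (step y z)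
  obtain P where P: "finite P" "u \<in> P" "y \<in> P" "\<forall>w \<in> P. (u, w) \<in> (r \<inter> P \<times> P)\<^sup>*"
    using step.IH by blast
  have mono: "(r \<inter> P \<times> P)\<^sup>* \<subseteq> (r \<inter> insert z P \<times> insert z P)\<^sup>*"
    by (rule rtrancl_mono) blast
  have "(y, z) \<in> r \<inter> insert z P \<times> insert z P"
    using step.hyps(2) P(3) by blast
  then have "(u, z) \<in> (r \<inter> insert z P \<times> insert z P)\<^sup>*"
    using P(2-4) mono by (blast intro: rtrancl_into_rtrancl)
  with P mono show ?case
    by (intro step.prems[of "insert z P"]) auto
qed

lemma connected_onI_reachable:
  assumes "symmetric_on N W" and "a \<in> W" and reach: "\<forall>w \<in> W. (a, w) \<in> (edges_on N W)\<^sup>*"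
  shows "connected_on N W"
  unfolding connected_on_def
proof (intro ballI)
  fix u v assume "u \<in> W" "v \<in> W"
  have "(u, a) \<in> ((edges_on N W)\<inverse>)\<^sup>*"
    using reach \<open>u \<in> W\<close> by (simp add: rtrancl_converse)
  then have "(u, a) \<in> (edges_on N W)\<^sup>*"
    by (simp add: converse_edges_on[OF assms(1)])
  with reach \<open>v \<in> W\<close> show "(u, v) \<in> (edges_on N W)\<^sup>*"
    by (meson rtrancl_trans)
qed

text \<open>W is the union of finite paths from a fixed vertex of D to each vertex of D.\<close>

lemma connected_on_finite_superset:
  assumes sym: "symmetric_on N V" and conn: "connected_on N V"
    and "finite D" and "D \<subseteq> V"
  obtains W where "finite W" "D \<subseteq> W" "W \<subseteq> V" "connected_on N W"
proof (cases "D = {}")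
  case True
  then show ?thesis
    using that[of "{}"] by (simp add: connected_on_def)
next
  case False
  then obtain a where a: "a \<in> D" by blast
  have "\<forall>d \<in> D. \<exists>P. finite P \<and> a \<in> P \<and> d \<in> P \<and>
      (\<forall>w \<in> P. (a, w) \<in> (edges_on N V \<inter> P \<times> P)\<^sup>*)"
  proof
    fix d assume "d \<in> D"
    then have "(a, d) \<in> (edges_on N V)\<^sup>*"
      using conn a \<open>D \<subseteq> V\<close> unfolding connected_on_def by blast
    then obtain P where "finite P" "a \<in> P" "d \<in> P"
        "\<forall>w \<in> P. (a, w) \<in> (edges_on N V \<inter> P \<times> P)\<^sup>*"
      by (rule rtrancl_finite_support)
    then show "\<exists>P. finite P \<and> a \<in> P \<and> d \<in> P \<and>
        (\<forall>w \<in> P. (a, w) \<in> (edges_on N V \<inter> P \<times> P)\<^sup>*)"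
      by blast
  qed
  from bchoice[OF this] obtain P where P: "\<forall>d \<in> D. finite (P d) \<and> a \<in> P d \<and> d \<in> P d \<and>
      (\<forall>w \<in> P d. (a, w) \<in> (edges_on N V \<inter> P d \<times> P d)\<^sup>*)" ..
  define W where "W = V \<inter> (\<Union>d \<in> D. P d)"
  have "W \<subseteq> V" "D \<subseteq> W" "finite W"
    using P \<open>D \<subseteq> V\<close> \<open>finite D\<close> by (auto simp: W_def)
  have "(a, w) \<in> (edges_on N W)\<^sup>*" if w: "w \<in> W" for w
  proof -
    obtain d where d: "d \<in> D" "w \<in> P d"
      using w by (auto simp: W_def)
    have "edges_on N V \<inter> P d \<times> P d \<subseteq> edges_on N W"
      unfolding edges_on_Int using d(1) by (auto simp: W_def edges_on_def)
    moreover have "(a, w) \<in> (edges_on N V \<inter> P d \<times> P d)\<^sup>*"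
      using P d by blast
    ultimately show ?thesis
      by (rule rtrancl_mono[THEN subsetD])
  qed
  then have "connected_on N W"
    using connected_onI_reachable[OF symmetric_on_subset[OF sym \<open>W \<subseteq> V\<close>]] a \<open>D \<subseteq> W\<close>
    by blast
  with \<open>finite W\<close> \<open>D \<subseteq> W\<close> \<open>W \<subseteq> V\<close> show ?thesis
    by (rule that)
qed

lemma twin_interchangeable:
  assumes "symmetric_on N W" and "a \<in> W" "a' \<in> W" "b \<in> W" and "N a \<inter> W = N a' \<inter> W"
  shows "a \<in> N b \<longleftrightarrow> a' \<in> N b"
  using assms unfolding symmetric_on_def by blast

lemma twin_free_connected_representatives:
  assumes sym: "symmetric_on N W" and conn: "connected_on N W"
  obtains R where "R \<subseteq> W" "connected_on N R" "inj_on (\<lambda>v. N v \<inter> R) R"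
    "card R = card ((\<lambda>v. N v \<inter> W) ` W)"
proof -
  define f where "f v = N v \<inter> W" for v
  define r where "r v = inv_into W f (f v)" for v
  define R where "R = r ` W"
  have r: "r v \<in> W" "f (r v) = f v" if "v \<in> W" for v
  proof -
    have "f v \<in> f ` W"
      using that by blast
    then show "r v \<in> W" "f (r v) = f v"
      by (simp_all add: r_def inv_into_into f_inv_into_f)
  qed
  have r_R: "r u = u" if "u \<in> R" for u
    using that r(2) by (auto simp: R_def r_def)
  have "R \<subseteq> W"
    using r by (auto simp: R_def)
  have sym': "a \<in> N b \<longleftrightarrow> b \<in> N a" if "a \<in> W" "b \<in> W" for a b
    using sym that unfolding symmetric_on_def by blast
  have swap: "a \<in> N b \<longleftrightarrow> r a \<in> N b" if "a \<in> W" "b \<in> W" for a b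
    using twin_interchangeable[OF sym that(1) r(1)[OF that(1)] that(2)] r(2)[OF that(1)]
    unfolding f_def by simp
  have edge: "(r a, r b) \<in> edges_on N R" if "(a, b) \<in> edges_on N W" for a b
  proof -
    have ab: "a \<in> W" "b \<in> W" "b \<in> N a"
      using that by (auto simp: edges_on_def)
    then have "a \<in> N (r b)"
      using swap[of b a] sym'[of a "r b"] r(1) by blast
    then have "r b \<in> N (r a)"
      using swap[of a "r b"] sym'[of "r a" "r b"] r(1) ab by blast
    with ab show ?thesis
      by (auto simp: edges_on_def R_def)
  qed
  have "connected_on N R"
    unfolding connected_on_def
  proof (intro ballI)
    fix u v assume "u \<in> R" "v \<in> R"
    then have "(u, v) \<in> (edges_on N W)\<^sup>*"
      using conn \<open>R \<subseteq> W\<close> unfolding connected_on_def by blast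
    then have "(r u, r v) \<in> (edges_on N R)\<^sup>*"
      by (rule rtrancl_map[where h = r]) (fact edge)
    then show "(u, v) \<in> (edges_on N R)\<^sup>*"
      using r_R \<open>u \<in> R\<close> \<open>v \<in> R\<close> by simp
  qed
  moreover have "inj_on (\<lambda>v. N v \<inter> R) R"
  proof (rule inj_onI)
    fix u v assume "u \<in> R" "v \<in> R" and eq: "N u \<inter> R = N v \<inter> R"
    have "w \<in> N u \<longleftrightarrow> w \<in> N v" if "w \<in> W" for w
    proof -
      have "r w \<in> R"
        using that by (simp add: R_def)
      then have "r w \<in> N u \<longleftrightarrow> r w \<in> N v"
        using eq by blast
      then show ?thesis
        using swap[of w u] swap[of w v] that \<open>u \<in> R\<close> \<open>v \<in> R\<close> \<open>R \<subseteq> W\<close> by blast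
    qed
    then have "f u = f v"
      by (auto simp: f_def)
    then show "u = v"
      using r_R \<open>u \<in> R\<close> \<open>v \<in> R\<close> by (metis r_def)
  qed
  moreover have "card R = card (f ` W)"
  proof -
    have "R = inv_into W f ` f ` W"
      by (auto simp: R_def r_def)
    then show ?thesis
      by (simp add: card_image inj_on_inv_into)
  qed
  ultimately show thesis
    using that \<open>R \<subseteq> W\<close> by (simp add: f_def)
qed

lemma finite_separating_set:
  assumes "finite A" and "inj_on N A"
  obtains D where "finite D" "D \<subseteq> \<Union> (N ` A)" "inj_on (\<lambda>v. N v \<inter> D) A"
proof -
  define sep where "sep u v = (SOME d. d \<in> (N u - N v) \<union> (N v - N u))" for u v
  have sep: "sep u v \<in> (N u - N v) \<union> (N v - N u)" if "u \<in> A" "v \<in> A" "u \<noteq> v" for u v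
  proof -
    have "N u \<noteq> N v"
      using inj_on_eq_iff[OF assms(2) that(1,2)] that(3) by simp
    then have "\<exists>d. d \<in> (N u - N v) \<union> (N v - N u)"
      by blast
    then show ?thesis
      unfolding sep_def by (rule someI_ex)
  qed
  define D where "D = (\<lambda>(u, v). sep u v) ` {(u, v) \<in> A \<times> A. u \<noteq> v}"
  have "finite D"
    unfolding D_def using assms(1)
    by (intro finite_imageI finite_subset[OF _ finite_cartesian_product]) auto
  moreover have "D \<subseteq> \<Union> (N ` A)"
    using sep by (auto simp: D_def)
  moreover have "inj_on (\<lambda>v. N v \<inter> D) A"
  proof (rule inj_onI, rule ccontr)
    fix u v assume "u \<in> A" "v \<in> A" "N u \<inter> D = N v \<inter> D" "u \<noteq> v"
    moreover have "sep u v \<in> D"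
      using \<open>u \<in> A\<close> \<open>v \<in> A\<close> \<open>u \<noteq> v\<close> by (auto simp: D_def)
    ultimately show False
      using sep[of u v] by blast
  qed
  ultimately show thesis
    using that by blast
qed

lemma inj_on_Int_mono: "inj_on (\<lambda>v. N v \<inter> D) A \<Longrightarrow> D \<subseteq> W \<Longrightarrow> inj_on (\<lambda>v. N v \<inter> W) A"
  unfolding inj_on_def by blast

lemma bip_iso_card_eq:
  assumes "bip_iso X1 Y1 E1 X2 Y2 E2"
  shows "card X1 + card Y1 = card X2 + card Y2"
  using assms unfolding bip_iso_def
  by (elim disjE exE conjE) (simp_all add: bij_betw_same_card)

lemma finitely_many_iso_types_card_bounded:
  assumes "finitely_many_iso_types G F"
  obtains M where "\<forall>(X1, Y1) \<in> F. card X1 + card Y1 \<le> M"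
proof -
  obtain S where S: "finite S" "\<forall>(X1, Y1) \<in> F. \<exists>(X2, Y2) \<in> S.
      bip_iso X1 Y1 (induced G X1 Y1) X2 Y2 (induced G X2 Y2)"
    using assms unfolding finitely_many_iso_types_def by blast
  define M where "M = (\<Sum>(X2, Y2) \<in> S. card X2 + card Y2)"
  have "card X1 + card Y1 \<le> M" if "(X1, Y1) \<in> F" for X1 Y1
  proof -
    have "\<exists>(X2, Y2) \<in> S. bip_iso X1 Y1 (induced G X1 Y1) X2 Y2 (induced G X2 Y2)"
      using bspec[OF S(2) that] by simp
    then obtain X2 Y2 where "(X2, Y2) \<in> S"
      and iso: "bip_iso X1 Y1 (induced G X1 Y1) X2 Y2 (induced G X2 Y2)"
      by blast
    from iso have "card X1 + card Y1 = card X2 + card Y2"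
      by (rule bip_iso_card_eq)
    also have "\<dots> \<le> M"
      unfolding M_def
      using member_le_sum[of "(X2, Y2)" S "\<lambda>(X2, Y2). card X2 + card Y2"]
        \<open>(X2, Y2) \<in> S\<close> \<open>finite S\<close> by simp
    finally show ?thesis .
  qed
  then have "\<forall>(X1, Y1) \<in> F. card X1 + card Y1 \<le> M"
    by auto
  then show thesis
    by (rule that)
qed

lemma nbr_subset: "nbr X Y G v \<subseteq> X <+> Y"
  unfolding nbr_def by (auto split: sum.splits)

lemma symmetric_on_nbr: "symmetric_on (nbr X Y G) (X <+> Y)"
  unfolding symmetric_on_def nbr_def by (auto split: sum.splits)

lemma nbr_induced:
  "X1 \<subseteq> X \<Longrightarrow> Y1 \<subseteq> Y \<Longrightarrow> v \<in> X1 <+> Y1 \<Longrightarrow>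
    nbr X1 Y1 (induced G X1 Y1) v = nbr X Y G v \<inter> (X1 <+> Y1)"
  unfolding nbr_def induced_def by (auto split: sum.splits)

lemma bip_connected_induced_iff:
  assumes "X1 \<subseteq> X" "Y1 \<subseteq> Y"
  shows "bip_connected X1 Y1 (induced G X1 Y1) \<longleftrightarrow> connected_on (nbr X Y G) (X1 <+> Y1)"
proof -
  have "adj X1 Y1 (induced G X1 Y1) \<union> (adj X1 Y1 (induced G X1 Y1))\<inverse>
      = edges_on (nbr X Y G) (X1 <+> Y1)"
    using assms unfolding adj_def edges_on_def nbr_def induced_def
    by (auto split: sum.splits) blast+
  then show ?thesis
    unfolding bip_connected_def connected_on_def by simp
qed

lemma twin_free_induced_iff:
  "X1 \<subseteq> X \<Longrightarrow> Y1 \<subseteq> Y \<Longrightarrow>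
    twin_free X1 Y1 (induced G X1 Y1) \<longleftrightarrow> inj_on (\<lambda>v. nbr X Y G v \<inter> (X1 <+> Y1)) (X1 <+> Y1)"
  unfolding twin_free_def by (simp add: nbr_induced cong: inj_on_cong)

lemma Plus_vimage_Inl_Inr: "Inl -` S <+> Inr -` S = S"
proof (rule set_eqI)
  show "x \<in> Inl -` S <+> Inr -` S \<longleftrightarrow> x \<in> S" for x
    by (cases x) auto
qed

lemma FG_memberI:
  assumes "W \<subseteq> X <+> Y" "finite W" "connected_on (nbr X Y G) W"
    "inj_on (\<lambda>v. nbr X Y G v \<inter> W) W"
  shows "(Inl -` W, Inr -` W) \<in> FG X Y G"
proof -
  have sides: "Inl -` W \<subseteq> X" "Inr -` W \<subseteq> Y"
    using assms(1) by auto
  have "finite (Inl -` W)" "finite (Inr -` W)"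
    using assms(2) Plus_vimage_Inl_Inr[of W] finite_Plus_iff by metis+
  with assms(3,4) show ?thesis
    unfolding FG_def
    by (simp add: sides bip_connected_induced_iff[OF sides] twin_free_induced_iff[OF sides]
        Plus_vimage_Inl_Inr)
qed

lemma card_twin_classes_le:
  assumes M: "\<forall>(X1, Y1) \<in> FG X Y G. card X1 + card Y1 \<le> M"
    and "W \<subseteq> X <+> Y" "finite W" "connected_on (nbr X Y G) W"
  shows "card ((\<lambda>v. nbr X Y G v \<inter> W) ` W) \<le> M"
proof -
  obtain R where R: "R \<subseteq> W" "connected_on (nbr X Y G) R" "inj_on (\<lambda>v. nbr X Y G v \<inter> R) R"
      "card R = card ((\<lambda>v. nbr X Y G v \<inter> W) ` W)"
    using twin_free_connected_representatives
      symmetric_on_subset[OF symmetric_on_nbr \<open>W \<subseteq> X <+> Y\<close>] assms(4) by blast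
  have "finite R" "R \<subseteq> X <+> Y"
    using R(1) assms(2,3) finite_subset by auto
  then have "(Inl -` R, Inr -` R) \<in> FG X Y G"
    using FG_memberI R(2,3) by blast
  with M have "card (Inl -` R) + card (Inr -` R) \<le> M"
    by blast
  moreover have "card R = card (Inl -` R) + card (Inr -` R)"
    using \<open>finite R\<close> Plus_vimage_Inl_Inr[of R]
    by (metis card_Plus finite_Plus_iff)
  ultimately show ?thesis
    using R(4) by simp
qed

lemma is_tf_inj_on_nbr:
  "is_tf X Y G X0 Y0 \<Longrightarrow> X0 <+> Y0 \<subseteq> X <+> Y \<and> inj_on (nbr X Y G) (X0 <+> Y0)"
  unfolding is_tf_def inj_on_def by blast

theorem lemma2p5:
  fixes X :: "'a set" and Y :: "'b set" and G :: "('a \<times> 'b) set"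
  assumes "G \<subseteq> X \<times> Y"
    and "bip_connected X Y G"
    and "finitely_many_iso_types G (FG X Y G)"
    and "is_tf X Y G X0 Y0"
  shows "finite X0 \<and> finite Y0"
proof (rule ccontr)
  assume "\<not> (finite X0 \<and> finite Y0)"
  let ?N = "nbr X Y G"
  obtain M where M: "\<forall>(X1, Y1) \<in> FG X Y G. card X1 + card Y1 \<le> M"
    using finitely_many_iso_types_card_bounded[OF assms(3)] .
  have tf: "X0 <+> Y0 \<subseteq> X <+> Y" "inj_on ?N (X0 <+> Y0)"
    using is_tf_inj_on_nbr[OF assms(4)] by auto
  obtain A where A: "A \<subseteq> X0 <+> Y0" "finite A" "card A = Suc M"
    using infinite_arbitrarily_large \<open>\<not> (finite X0 \<and> finite Y0)\<close> by (metis finite_Plus_iff)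
  obtain D where D: "finite D" "D \<subseteq> \<Union> (?N ` A)" "inj_on (\<lambda>v. ?N v \<inter> D) A"
    using finite_separating_set A(2) inj_on_subset[OF tf(2) A(1)] by blast
  have "connected_on ?N (X <+> Y)"
    using assms(1,2) bip_connected_induced_iff[of X X Y Y G] by (simp add: induced_def Int_absorb2)
  moreover have "A \<union> D \<subseteq> X <+> Y"
    using A(1) tf(1) D(2) nbr_subset by blast
  ultimately obtain W where W: "finite W" "A \<union> D \<subseteq> W" "W \<subseteq> X <+> Y" "connected_on ?N W"
    using connected_on_finite_superset[OF symmetric_on_nbr] A(2) D(1) by (metis finite_UnI)
  have "card A = card ((\<lambda>v. ?N v \<inter> W) ` A)"
    using inj_on_Int_mono[OF D(3)] W(2) by (simp add: card_image)
  also have "\<dots> \<le> card ((\<lambda>v. ?N v \<inter> W) ` W)"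
    using W(1,2) by (intro card_mono) auto
  also have "\<dots> \<le> M"
    using card_twin_classes_le[OF M W(3,1,4)] .
  finally show False
    using A(3) by simp
qed

end
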